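(* For all real numbers $x,y$ with $1 \leqslant y \leqslant x$, \[ \frac{-N(x)}{x}=\sum_{k \leqslant y} \frac{\Lambda(k)}{k} \frac{M(x/k)}{x/k}+\sum_{j \leqslant x/y} \frac{\mu(j)}{j} \frac{\psi(x/j)-x/j}{x/j}-\frac{\psi(y)-y}{y}\frac{M(x/y)}{x/y}+m_1(x/y). \]
   Context: $\mu$ is the Möbius function and $\Lambda$ the von Mangoldt function ($\Lambda(n)=\log p$ if $n=p^k$ with $p$ prime and $k\geqslant 1$, else $0$). For real $x>0$: $M(x)=\sum_{n\leqslant x}\mu(n)$, $m(x)=\sum_{n\leqslant x}\mu(n)/n$, $m_1(x)=m(x)-M(x)/x=\sum_{n\leqslant x}\frac{\mu(n)}{n}(1-n/x)$, $N(x)=\sum_{n\leqslant x}\mu(n)\log n$, $\psi(x)=\sum_{n\leqslant x}\Lambda(n)$. Sums run over positive integers. *)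

theory Defs
  imports "HOL-Number_Theory.Number_Theory" "HOL-Computational_Algebra.Squarefree"
begin

definition moebius_mu :: "nat \<Rightarrow> real" where
  "moebius_mu n = (if squarefree n then (-1) ^ card (prime_factors n) else 0)"

definition Mertens :: "real \<Rightarrow> real" where
  "Mertens x = (\<Sum>n\<in>{1..nat \<lfloor>x\<rfloor>}. moebius_mu n)"

definition mlog :: "real \<Rightarrow> real" where
  "mlog x = (\<Sum>n\<in>{1..nat \<lfloor>x\<rfloor>}. moebius_mu n / real n)"

definition m1 :: "real \<Rightarrow> real" where
  "m1 x = mlog x - Mertens x / x"

definition Nmu :: "real \<Rightarrow> real" where
  "Nmu x = (\<Sum>n\<in>{1..nat \<lfloor>x\<rfloor>}. moebius_mu n * ln (real n))"

definition psi :: "real \<Rightarrow> real" where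
  "psi x = (\<Sum>n\<in>{1..nat \<lfloor>x\<rfloor>}. mangoldt n)"

end

theory Submission
  imports Defs
begin

text \<open>Moebius inversion of \<open>log = 1 * \<Lambda>\<close> gives \<open>\<mu> * log = \<Lambda>\<close>, hence
  \<open>\<Sum>\<^bsub>d | n\<^esub> \<mu>(d) log d = -\<Lambda>(n)\<close>, and inverting once more gives \<open>\<mu> * \<Lambda> = -\<mu> log\<close> (Dirichlet convolutions).
  So \<open>-N(x)\<close> is the sum of \<open>\<mu>(d) \<Lambda>(k)\<close> over the lattice points \<open>d, k \<ge> 1\<close>, \<open>d k \<le> x\<close>.
  Dirichlet's hyperbola method covers this region by the parts \<open>k \<le> y\<close> and \<open>d \<le> x/y\<close>, which
  overlap in a rectangle, and gives
  \<open>-N(x) = \<Sum>\<^bsub>k \<le> y\<^esub> \<Lambda>(k) M(x/k) + \<Sum>\<^bsub>j \<le> x/y\<^esub> \<mu>(j) \<psi>(x/j) - \<psi>(y) M(x/y)\<close>.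
  Dividing by \<open>x\<close> and splitting off \<open>m(x/y)\<close> from the second sum yields the identity.\<close>

lemma prime_factors_prod_primes:
  fixes S :: "nat set"
  assumes "finite S" "\<And>p. p \<in> S \<Longrightarrow> prime p"
  shows "prime_factors (\<Prod>S) = S"
proof -
  have "prime_factors (prod id S) = \<Union>((prime_factors \<circ> id) ` S)"
    by (rule prime_factors_prod) (use assms in \<open>auto dest: prime_gt_0_nat\<close>)
  also have "\<dots> = S" using assms by (auto simp: prime_prime_factors)
  finally show ?thesis by simp
qed

lemma squarefree_prod_primes:
  fixes S :: "nat set"
  assumes "\<And>p. p \<in> S \<Longrightarrow> prime p"
  shows "squarefree (\<Prod>S)"
  using squarefree_prod_coprime[of S id] assms by (simp add: primes_coprime squarefree_prime)

lemma prod_prime_factors_squarefree: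
  fixes d :: nat
  assumes "squarefree d"
  shows "\<Prod>(prime_factors d) = d"
proof -
  have "d \<noteq> 0" using assms by (metis not_squarefree_0)
  then have "d = (\<Prod>p\<in>prime_factors d. p ^ multiplicity p d)" by (simp add: prod_prime_factors)
  also have "\<dots> = \<Prod>(prime_factors d)"
    using assms \<open>d \<noteq> 0\<close> by (intro prod.cong) (auto simp: squarefree_factorial_semiring')
  finally show ?thesis by simp
qed

lemma bij_betw_squarefree_divisors_prime_factors:
  fixes n :: nat
  assumes "n > 0"
  shows "bij_betw prime_factors {d. d dvd n \<and> squarefree d} (Pow (prime_factors n))"
proof (rule bij_betw_byWitness[where f' = Prod])
  show "\<forall>d\<in>{d. d dvd n \<and> squarefree d}. \<Prod>(prime_factors d) = d"
    by (auto simp: prod_prime_factors_squarefree)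
  show "prime_factors ` {d. d dvd n \<and> squarefree d} \<subseteq> Pow (prime_factors n)"
    using assms by (auto simp: prime_factors_dvd intro: dvd_trans)
  have "\<Prod>S dvd n" if "S \<subseteq> prime_factors n" for S
  proof -
    have "\<Prod>S dvd \<Prod>(prime_factors n)" using that by (intro prod_dvd_prod_subset) auto
    also have "\<dots> dvd (\<Prod>p\<in>prime_factors n. p ^ multiplicity p n)"
      by (intro prod_dvd_prod) (auto simp: prime_factors_multiplicity)
    also have "\<dots> = n" using assms by (simp add: prod_prime_factors)
    finally show ?thesis .
  qed
  moreover have "finite S" "\<And>p. p \<in> S \<Longrightarrow> prime p" if "S \<subseteq> prime_factors n" for S
    using that finite_subset by blast+
  ultimately show "\<forall>S\<in>Pow (prime_factors n). prime_factors (\<Prod>S) = S"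
    and "Prod ` Pow (prime_factors n) \<subseteq> {d. d dvd n \<and> squarefree d}"
    using prime_factors_prod_primes squarefree_prod_primes by auto
qed

lemma sum_moebius_mu_divisors:
  fixes n :: nat
  assumes "n > 0"
  shows "(\<Sum>d | d dvd n. moebius_mu d) = (if n = 1 then 1 else 0)"
proof -
  have "(\<Sum>d | d dvd n. moebius_mu d) = (\<Sum>d | d dvd n \<and> squarefree d. (-1) ^ card (prime_factors d))"
    using assms by (intro sum.mono_neutral_cong_right) (auto simp: moebius_mu_def)
  also have "\<dots> = (\<Sum>S\<in>Pow (prime_factors n). (-1) ^ card S)"
    using sum.reindex_bij_betw[OF bij_betw_squarefree_divisors_prime_factors[OF assms],
        of "\<lambda>S. (-1) ^ card S :: real"] by simp
  also have "\<dots> = (\<Prod>p\<in>prime_factors n. 1 - 1 :: real)"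
    using prod_diff_conv_sum[of "prime_factors n" "\<lambda>_. 1::real" "\<lambda>_. 1"] by simp
  also have "\<dots> = (if n = 1 then 1 else 0)"
  proof (cases "prime_factors n = {}")
    case True
    then have "n = 1" using assms prod_prime_factors[of n] by simp
    with True show ?thesis by simp
  next
    case False
    then show ?thesis by (auto simp: card_gt_0_iff)
  qed
  finally show ?thesis .
qed

lemma sum_divisors_of_quotient_swap:
  fixes h :: "nat \<Rightarrow> nat \<Rightarrow> 'a::comm_monoid_add"
  assumes "n > 0"
  shows "(\<Sum>d | d dvd n. \<Sum>e | e dvd n div d. h d e) = (\<Sum>e | e dvd n. \<Sum>d | d dvd n div e. h d e)"
proof -
  have as_pairs: "(\<Sum>d | d dvd n. \<Sum>e | e dvd n div d. h' d e) = (\<Sum>(d, e)\<in>{(d, e). d * e dvd n}. h' d e)"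
    for h' :: "nat \<Rightarrow> nat \<Rightarrow> 'a"
  proof -
    have "{(d, e). d * e dvd n} = (SIGMA d:{d. d dvd n}. {e. e dvd n div d})"
      using assms by (auto simp: dvd_div_iff_mult mult.commute intro: dvd_mult_left)
    then show ?thesis by (simp only:) (rule sum.Sigma, use assms in auto)
  qed
  have "(\<Sum>(d, e)\<in>{(d, e). d * e dvd n}. h d e) = (\<Sum>(e, d)\<in>{(e, d). e * d dvd n}. h d e)"
    by (rule sum.reindex_bij_witness[where i = prod.swap and j = prod.swap]) (auto simp: mult.commute)
  then show ?thesis by (simp add: as_pairs)
qed

lemma moebius_inversion:
  fixes f :: "nat \<Rightarrow> real"
  assumes "n > 0"
  shows "(\<Sum>d | d dvd n. moebius_mu d * (\<Sum>e | e dvd n div d. f e)) = f n"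
proof -
  have "(\<Sum>d | d dvd n. moebius_mu d * (\<Sum>e | e dvd n div d. f e))
      = (\<Sum>e | e dvd n. (\<Sum>d | d dvd n div e. moebius_mu d) * f e)"
    using sum_divisors_of_quotient_swap[OF assms, of "\<lambda>d e. moebius_mu d * f e"]
    by (simp add: sum_distrib_left sum_distrib_right)
  also have "\<dots> = (\<Sum>e | e dvd n. if e = n then f e else 0)"
  proof (intro sum.cong refl)
    fix e assume "e \<in> {e. e dvd n}"
    then obtain k where k: "n = e * k" by blast
    then have "n div e = k" "k > 0" using assms by auto
    moreover have "k = 1 \<longleftrightarrow> e = n" using k assms by auto
    ultimately show "(\<Sum>d | d dvd n div e. moebius_mu d) * f e = (if e = n then f e else 0)"
      by (simp add: sum_moebius_mu_divisors)
  qed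
  also have "\<dots> = f n" using assms by simp
  finally show ?thesis .
qed

lemma sum_moebius_mu_ln_quotient:
  fixes n :: nat
  assumes "n > 0"
  shows "(\<Sum>d | d dvd n. moebius_mu d * ln (real (n div d))) = mangoldt n"
proof -
  have "ln (real (n div d)) = (\<Sum>e | e dvd n div d. mangoldt e)" if "d dvd n" for d
    using that assms by (subst mangoldt_sum) (auto elim: dvdE)
  then show ?thesis using moebius_inversion[OF assms, of mangoldt] by simp
qed

lemma sum_moebius_mu_ln:
  fixes n :: nat
  assumes "n > 0"
  shows "(\<Sum>d | d dvd n. moebius_mu d * ln (real d)) = - mangoldt n"
proof -
  have split_ln: "moebius_mu d * ln (real d) = moebius_mu d * ln (real n) - moebius_mu d * ln (real (n div d))"
    if "d dvd n" for d
  proof -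
    obtain k where k: "n = d * k" using \<open>d dvd n\<close> by blast
    with assms have "d > 0" "k > 0" "n div d = k" by auto
    then show ?thesis using k by (simp add: ln_mult algebra_simps)
  qed
  have "(\<Sum>d | d dvd n. moebius_mu d * ln (real d))
      = (\<Sum>d | d dvd n. moebius_mu d * ln (real n) - moebius_mu d * ln (real (n div d)))"
    by (intro sum.cong) (simp_all add: split_ln)
  also have "\<dots> = (\<Sum>d | d dvd n. moebius_mu d) * ln (real n)
      - (\<Sum>d | d dvd n. moebius_mu d * ln (real (n div d)))"
    by (simp add: sum_subtractf sum_distrib_right)
  also have "\<dots> = - mangoldt n"
    using assms by (simp add: sum_moebius_mu_divisors sum_moebius_mu_ln_quotient)
  finally show ?thesis .
qed

lemma sum_moebius_mu_mangoldt_quotient: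
  fixes n :: nat
  assumes "n > 0"
  shows "(\<Sum>d | d dvd n. moebius_mu d * mangoldt (n div d)) = - moebius_mu n * ln (real n)"
proof -
  have "mangoldt (n div d) = (\<Sum>e | e dvd n div d. - (moebius_mu e * ln (real e)))" if "d dvd n" for d
  proof -
    have "n div d > 0" using that assms by (auto elim: dvdE)
    then show ?thesis by (simp add: sum_negf sum_moebius_mu_ln)
  qed
  then show ?thesis using moebius_inversion[OF assms, of "\<lambda>e. - (moebius_mu e * ln (real e))"] by simp
qed

definition sum_upto :: "(nat \<Rightarrow> 'a::comm_monoid_add) \<Rightarrow> real \<Rightarrow> 'a" where
  "sum_upto f x = (\<Sum>n\<in>{1..nat \<lfloor>x\<rfloor>}. f n)"

definition hyperbola_pairs :: "real \<Rightarrow> (nat \<times> nat) set" where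
  "hyperbola_pairs x = {(d, k). 1 \<le> d \<and> 1 \<le> k \<and> real (d * k) \<le> x}"

lemma le_nat_floor_iff: "1 \<le> k \<Longrightarrow> k \<le> nat \<lfloor>t\<rfloor> \<longleftrightarrow> real k \<le> t"
  by linarith

lemma hyperbola_pairs_subset: "hyperbola_pairs x \<subseteq> {1..nat \<lfloor>x\<rfloor>} \<times> {1..nat \<lfloor>x\<rfloor>}"
proof safe
  fix d k assume "(d, k) \<in> hyperbola_pairs x"
  then have pair: "1 \<le> d" "1 \<le> k" "real d * real k \<le> x" by (auto simp: hyperbola_pairs_def)
  then have "real d \<le> real d * real k" "real k \<le> real d * real k" by simp_all
  then have "real d \<le> x" "real k \<le> x" using pair(3) by linarith+
  with pair show "d \<in> {1..nat \<lfloor>x\<rfloor>}" "k \<in> {1..nat \<lfloor>x\<rfloor>}" by (auto simp: le_nat_floor_iff)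
qed

lemma finite_hyperbola_pairs: "finite (hyperbola_pairs x)"
  using hyperbola_pairs_subset by (rule finite_subset) simp

lemma sum_upto_divisor_sum:
  "sum_upto (\<lambda>n. \<Sum>d | d dvd n. h d (n div d)) x = (\<Sum>(d, k)\<in>hyperbola_pairs x. h d k)"
proof -
  have "sum_upto (\<lambda>n. \<Sum>d | d dvd n. h d (n div d)) x
      = (\<Sum>(n, d)\<in>(SIGMA n:{1..nat \<lfloor>x\<rfloor>}. {d. d dvd n}). h d (n div d))"
    unfolding sum_upto_def by (rule sum.Sigma) auto
  also have "\<dots> = (\<Sum>(d, k)\<in>hyperbola_pairs x. h d k)"
  proof (rule sum.reindex_bij_witness[where j = "\<lambda>(n, d). (d, n div d)" and i = "\<lambda>(d, k). (d * k, d)"])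
    fix p assume "p \<in> (SIGMA n:{1..nat \<lfloor>x\<rfloor>}. {d. d dvd n})"
    then obtain d k where "p = (d * k, d)" "1 \<le> d * k" "real (d * k) \<le> x"
      by (auto simp: le_nat_floor_iff elim!: dvdE)
    then show "(case (case p of (n, d) \<Rightarrow> (d, n div d)) of (d, k) \<Rightarrow> (d * k, d)) = p"
      and "(case p of (n, d) \<Rightarrow> (d, n div d)) \<in> hyperbola_pairs x"
      and "(case (case p of (n, d) \<Rightarrow> (d, n div d)) of (d, k) \<Rightarrow> h d k) = (case p of (n, d) \<Rightarrow> h d (n div d))"
      by (auto simp: hyperbola_pairs_def)
  next
    fix p assume "p \<in> hyperbola_pairs x"
    then show "(case (case p of (d, k) \<Rightarrow> (d * k, d)) of (n, d) \<Rightarrow> (d, n div d)) = p"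
      and "(case p of (d, k) \<Rightarrow> (d * k, d)) \<in> (SIGMA n:{1..nat \<lfloor>x\<rfloor>}. {d. d dvd n})"
      by (auto simp: hyperbola_pairs_def le_nat_floor_iff simp del: of_nat_mult)
  qed
  finally show ?thesis .
qed

lemma sum_hyperbola_pairs_fst_le:
  "(\<Sum>(d, k)\<in>{p \<in> hyperbola_pairs x. real (fst p) \<le> z}. h d k)
    = (\<Sum>d\<in>{1..nat \<lfloor>z\<rfloor>}. \<Sum>k\<in>{1..nat \<lfloor>x / real d\<rfloor>}. h d k)"
proof -
  have "{p \<in> hyperbola_pairs x. real (fst p) \<le> z} = (SIGMA d:{1..nat \<lfloor>z\<rfloor>}. {1..nat \<lfloor>x / real d\<rfloor>})"
    by (auto simp: hyperbola_pairs_def le_nat_floor_iff pos_le_divide_eq mult.commute)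
  then show ?thesis by (simp add: sum.Sigma)
qed

lemma dirichlet_hyperbola:
  fixes f g :: "nat \<Rightarrow> 'a::comm_ring"
  assumes "y > 0"
  shows "(\<Sum>(d, k)\<in>hyperbola_pairs x. f d * g k)
    = (\<Sum>k\<in>{1..nat \<lfloor>y\<rfloor>}. g k * sum_upto f (x / real k))
    + (\<Sum>d\<in>{1..nat \<lfloor>x / y\<rfloor>}. f d * sum_upto g (x / real d))
    - sum_upto f (x / y) * sum_upto g y"
proof -
  define A where "A = {p \<in> hyperbola_pairs x. real (snd p) \<le> y}"
  define B where "B = {p \<in> hyperbola_pairs x. real (fst p) \<le> x / y}"
  have "p \<in> A \<union> B" if "p \<in> hyperbola_pairs x" for p
  proof (rule ccontr)
    obtain d k where p: "p = (d, k)" "1 \<le> d" "1 \<le> k" "real d * real k \<le> x"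
      using \<open>p \<in> hyperbola_pairs x\<close> by (auto simp: hyperbola_pairs_def)
    assume "p \<notin> A \<union> B"
    then have "y < real k" "x / y < real d" using p that by (auto simp: A_def B_def)
    then have "x / y * y < real d * real k" using assms p by (intro mult_strict_mono) auto
    with p assms show False by simp
  qed
  then have cover: "hyperbola_pairs x = A \<union> B" by (auto simp: A_def B_def)
  have "real d * real k \<le> x" if "1 \<le> d" "real d \<le> x / y" "real k \<le> y" for d k
  proof -
    have "real d * real k \<le> x / y * y" using that by (intro mult_mono) auto
    then show ?thesis using assms by simp
  qed
  then have overlap: "A \<inter> B = {1..nat \<lfloor>x / y\<rfloor>} \<times> {1..nat \<lfloor>y\<rfloor>}"
    by (auto simp: A_def B_def hyperbola_pairs_def le_nat_floor_iff)
  have "A = prod.swap ` {p \<in> hyperbola_pairs x. real (fst p) \<le> y}"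
    by (auto simp: A_def hyperbola_pairs_def image_iff mult.commute)
  then have sum_A: "(\<Sum>(d, k)\<in>A. f d * g k) = (\<Sum>k\<in>{1..nat \<lfloor>y\<rfloor>}. g k * sum_upto f (x / real k))"
    by (simp add: sum.reindex sum_hyperbola_pairs_fst_le sum_upto_def sum_distrib_left mult.commute)
  have sum_B: "(\<Sum>(d, k)\<in>B. f d * g k) = (\<Sum>d\<in>{1..nat \<lfloor>x / y\<rfloor>}. f d * sum_upto g (x / real d))"
    by (simp add: B_def sum_hyperbola_pairs_fst_le sum_upto_def sum_distrib_left)
  have sum_overlap: "(\<Sum>(d, k)\<in>A \<inter> B. f d * g k) = sum_upto f (x / y) * sum_upto g y"
    by (simp add: overlap sum_upto_def sum_product sum.cartesian_product)
  have "finite A" "finite B"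
    using finite_hyperbola_pairs by (auto simp: A_def B_def)
  then show ?thesis
    using sum.union_inter[of A B "\<lambda>(d, k). f d * g k"]
    by (simp add: cover sum_A sum_B sum_overlap eq_diff_eq)
qed

lemma minus_Nmu_hyperbola:
  assumes "y > 0"
  shows "- Nmu x = (\<Sum>k\<in>{1..nat \<lfloor>y\<rfloor>}. mangoldt k * Mertens (x / real k))
    + (\<Sum>j\<in>{1..nat \<lfloor>x / y\<rfloor>}. moebius_mu j * psi (x / real j))
    - psi y * Mertens (x / y)"
proof -
  have "- Nmu x = sum_upto (\<lambda>n. \<Sum>d | d dvd n. moebius_mu d * mangoldt (n div d)) x"
    unfolding Nmu_def sum_upto_def
    by (simp add: sum_moebius_mu_mangoldt_quotient flip: sum_negf)
  also have "\<dots> = (\<Sum>(d, k)\<in>hyperbola_pairs x. moebius_mu d * mangoldt k)"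
    by (rule sum_upto_divisor_sum)
  finally show ?thesis
    using dirichlet_hyperbola[OF assms, of moebius_mu mangoldt x]
    by (simp add: Mertens_def psi_def sum_upto_def mult.commute)
qed

theorem mainTheorem3:
  fixes x y :: real
  assumes "1 \<le> y" and "y \<le> x"
  shows "- Nmu x / x =
      (\<Sum>k\<in>{1..nat \<lfloor>y\<rfloor>}. mangoldt k / real k * (Mertens (x / real k) / (x / real k)))
    + (\<Sum>j\<in>{1..nat \<lfloor>x / y\<rfloor>}. moebius_mu j / real j * ((psi (x / real j) - x / real j) / (x / real j)))
    - (psi y - y) / y * (Mertens (x / y) / (x / y))
    + m1 (x / y)"
proof -
  have "x > 0" "y > 0" using assms by auto
  have sum_k: "(\<Sum>k\<in>{1..nat \<lfloor>y\<rfloor>}. mangoldt k / real k * (Mertens (x / real k) / (x / real k)))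
      = (\<Sum>k\<in>{1..nat \<lfloor>y\<rfloor>}. mangoldt k * Mertens (x / real k)) / x"
    unfolding sum_divide_distrib using \<open>x > 0\<close> by (intro sum.cong refl) (auto simp: field_simps)
  have sum_j: "(\<Sum>j\<in>{1..nat \<lfloor>x / y\<rfloor>}. moebius_mu j / real j * ((psi (x / real j) - x / real j) / (x / real j)))
      = (\<Sum>j\<in>{1..nat \<lfloor>x / y\<rfloor>}. moebius_mu j * psi (x / real j)) / x - mlog (x / y)"
    unfolding sum_divide_distrib mlog_def sum_subtractf[symmetric]
    using \<open>x > 0\<close> by (intro sum.cong refl) (auto simp: field_simps)
  have last_terms: "(psi y - y) / y * (Mertens (x / y) / (x / y)) - m1 (x / y)
      = psi y * Mertens (x / y) / x - mlog (x / y)"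
    unfolding m1_def using \<open>x > 0\<close> \<open>y > 0\<close> by (simp add: field_simps)
  have "- Nmu x / x = (\<Sum>k\<in>{1..nat \<lfloor>y\<rfloor>}. mangoldt k * Mertens (x / real k)) / x
      + (\<Sum>j\<in>{1..nat \<lfloor>x / y\<rfloor>}. moebius_mu j * psi (x / real j)) / x - psi y * Mertens (x / y) / x"
    using minus_Nmu_hyperbola[OF \<open>y > 0\<close>, of x] by (simp add: diff_divide_distrib add_divide_distrib)
  then show ?thesis unfolding sum_k sum_j using last_terms by linarith
qed

end
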